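(* Let $\mathcal{G}$ be an effective ample groupoid. (1) If $|\operatorname{Orb}_{\mathcal{G}}(x)|\ge2$ for every $x\in\mathcal{G}^{(0)}$, then $\llbracket\mathcal{G}\rrbracket$ covers $\mathcal{G}$. (2) If $|\operatorname{Orb}_{\mathcal{G}}(x)|\ge3$ for every $x\in\mathcal{G}^{(0)}$, then $\mathsf{D}(\llbracket\mathcal{G}\rrbracket)$ covers $\mathcal{G}$.
   Context: Étale groupoid: range map $r(g)=gg^{-1}$ (and source $s(g)=g^{-1}g$) a local homeomorphism; ample: étale with $\mathcal{G}^{(0)}$ Hausdorff having a basis of compact open sets; effective: interior of $\{g:s(g)=r(g)\}$ equals $\mathcal{G}^{(0)}$. $\operatorname{Orb}_{\mathcal{G}}(x)=\{r(g):s(g)=x\}$. A full bisection is an open $U\subseteq\mathcal{G}$ with $s|_U,r|_U$ injective and $s(U)=r(U)=\mathcal{G}^{(0)}$; $\pi_U=r|_U\circ(s|_U)^{-1}$. $\llbracket\mathcal{G}\rrbracket$ is the group of all $\pi_U$ for full bisections $U$ with compact support (closure of moved points); $\mathsf{D}(\llbracket\mathcal{G}\rrbracket)$ its commutator subgroup. A subgroup $\Gamma\le\llbracket\mathcal{G}\rrbracket$ covers $\mathcal{G}$ if for every $g\in\mathcal{G}$ there is a full bisection $U$ with $g\in U$ and $\pi_U\in\Gamma$. *)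

theory Defs
  imports "HOL-Analysis.Analysis" "HOL-Algebra.Generated_Groups"
begin

text \<open>A groupoid is given by its set of arrows G, a multiplication m (meaningful on
composable pairs) and an inversion i.\<close>

definition gsrc :: "('g \<Rightarrow> 'g \<Rightarrow> 'g) \<Rightarrow> ('g \<Rightarrow> 'g) \<Rightarrow> 'g \<Rightarrow> 'g" where
  "gsrc m i g = m (i g) g"

definition grng :: "('g \<Rightarrow> 'g \<Rightarrow> 'g) \<Rightarrow> ('g \<Rightarrow> 'g) \<Rightarrow> 'g \<Rightarrow> 'g" where
  "grng m i g = m g (i g)"

definition units :: "'g set \<Rightarrow> ('g \<Rightarrow> 'g \<Rightarrow> 'g) \<Rightarrow> ('g \<Rightarrow> 'g) \<Rightarrow> 'g set" where
  "units G m i = grng m i ` G"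

definition composable :: "'g set \<Rightarrow> ('g \<Rightarrow> 'g \<Rightarrow> 'g) \<Rightarrow> ('g \<Rightarrow> 'g) \<Rightarrow> ('g \<times> 'g) set" where
  "composable G m i = {(g, h). g \<in> G \<and> h \<in> G \<and> gsrc m i g = grng m i h}"

definition groupoid :: "'g set \<Rightarrow> ('g \<Rightarrow> 'g \<Rightarrow> 'g) \<Rightarrow> ('g \<Rightarrow> 'g) \<Rightarrow> bool" where
  "groupoid G m i \<longleftrightarrow>
     (\<forall>g\<in>G. i g \<in> G \<and> i (i g) = g) \<and>
     (\<forall>g\<in>G. \<forall>h\<in>G. gsrc m i g = grng m i h \<longrightarrow>
        m g h \<in> G \<and> gsrc m i (m g h) = gsrc m i h \<and> grng m i (m g h) = grng m i g \<and>
        m (i g) (m g h) = h \<and> m (m g h) (i h) = g) \<and>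
     (\<forall>g\<in>G. \<forall>h\<in>G. \<forall>k\<in>G. gsrc m i g = grng m i h \<and> gsrc m i h = grng m i k \<longrightarrow>
        m (m g h) k = m g (m h k))"

definition top_groupoid :: "'g topology \<Rightarrow> 'g set \<Rightarrow> ('g \<Rightarrow> 'g \<Rightarrow> 'g) \<Rightarrow> ('g \<Rightarrow> 'g) \<Rightarrow> bool" where
  "top_groupoid T G m i \<longleftrightarrow> groupoid G m i \<and> topspace T = G \<and>
     continuous_map (subtopology (prod_topology T T) (composable G m i)) T (\<lambda>(g, h). m g h) \<and>
     continuous_map T T i"

definition etale :: "'g topology \<Rightarrow> 'g set \<Rightarrow> ('g \<Rightarrow> 'g \<Rightarrow> 'g) \<Rightarrow> ('g \<Rightarrow> 'g) \<Rightarrow> bool" where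
  "etale T G m i \<longleftrightarrow> top_groupoid T G m i \<and>
     (\<forall>g\<in>G. \<exists>U. openin T U \<and> g \<in> U \<and>
        openin (subtopology T (units G m i)) (grng m i ` U) \<and>
        homeomorphic_map (subtopology T U) (subtopology T (grng m i ` U)) (grng m i))"

definition ample :: "'g topology \<Rightarrow> 'g set \<Rightarrow> ('g \<Rightarrow> 'g \<Rightarrow> 'g) \<Rightarrow> ('g \<Rightarrow> 'g) \<Rightarrow> bool" where
  "ample T G m i \<longleftrightarrow> etale T G m i \<and>
     Hausdorff_space (subtopology T (units G m i)) \<and>
     (\<forall>W x. openin (subtopology T (units G m i)) W \<and> x \<in> W \<longrightarrow>
        (\<exists>K. openin (subtopology T (units G m i)) K \<and> compactin T K \<and> x \<in> K \<and> K \<subseteq> W))"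

definition effective :: "'g topology \<Rightarrow> 'g set \<Rightarrow> ('g \<Rightarrow> 'g \<Rightarrow> 'g) \<Rightarrow> ('g \<Rightarrow> 'g) \<Rightarrow> bool" where
  "effective T G m i \<longleftrightarrow>
     T interior_of {g \<in> G. gsrc m i g = grng m i g} = units G m i"

definition orbit :: "'g set \<Rightarrow> ('g \<Rightarrow> 'g \<Rightarrow> 'g) \<Rightarrow> ('g \<Rightarrow> 'g) \<Rightarrow> 'g \<Rightarrow> 'g set" where
  "orbit G m i x = {grng m i g | g. g \<in> G \<and> gsrc m i g = x}"

definition card_ge :: "'a set \<Rightarrow> nat \<Rightarrow> bool" where
  "card_ge A n \<longleftrightarrow> infinite A \<or> n \<le> card A"

definition full_bisection :: "'g topology \<Rightarrow> 'g set \<Rightarrow> ('g \<Rightarrow> 'g \<Rightarrow> 'g) \<Rightarrow> ('g \<Rightarrow> 'g) \<Rightarrow> 'g set \<Rightarrow> bool" where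
  "full_bisection T G m i U \<longleftrightarrow> openin T U \<and> U \<subseteq> G \<and>
     inj_on (gsrc m i) U \<and> inj_on (grng m i) U \<and>
     gsrc m i ` U = units G m i \<and> grng m i ` U = units G m i"

text \<open>pi_U = r|_U o (s|_U)^-1 on the unit space, extended by the identity outside it
(so that these maps form a group of permutations under composition).\<close>

definition bisect_map :: "'g set \<Rightarrow> ('g \<Rightarrow> 'g \<Rightarrow> 'g) \<Rightarrow> ('g \<Rightarrow> 'g) \<Rightarrow> 'g set \<Rightarrow> 'g \<Rightarrow> 'g" where
  "bisect_map G m i U x =
     (if x \<in> units G m i then grng m i (THE g. g \<in> U \<and> gsrc m i g = x) else x)"

definition compact_support :: "'g topology \<Rightarrow> 'g set \<Rightarrow> ('g \<Rightarrow> 'g \<Rightarrow> 'g) \<Rightarrow> ('g \<Rightarrow> 'g) \<Rightarrow> ('g \<Rightarrow> 'g) \<Rightarrow> bool" where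
  "compact_support T G m i f \<longleftrightarrow>
     compactin (subtopology T (units G m i))
       ((subtopology T (units G m i)) closure_of {x \<in> units G m i. f x \<noteq> x})"

definition full_group :: "'g topology \<Rightarrow> 'g set \<Rightarrow> ('g \<Rightarrow> 'g \<Rightarrow> 'g) \<Rightarrow> ('g \<Rightarrow> 'g) \<Rightarrow> ('g \<Rightarrow> 'g) set" where
  "full_group T G m i = {bisect_map G m i U | U. full_bisection T G m i U \<and>
                            compact_support T G m i (bisect_map G m i U)}"

definition full_group_str :: "'g topology \<Rightarrow> 'g set \<Rightarrow> ('g \<Rightarrow> 'g \<Rightarrow> 'g) \<Rightarrow> ('g \<Rightarrow> 'g) \<Rightarrow> ('g \<Rightarrow> 'g) monoid" where
  "full_group_str T G m i = \<lparr>carrier = full_group T G m i, mult = (\<circ>), one = id\<rparr>"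

definition full_group_commutator :: "'g topology \<Rightarrow> 'g set \<Rightarrow> ('g \<Rightarrow> 'g \<Rightarrow> 'g) \<Rightarrow> ('g \<Rightarrow> 'g) \<Rightarrow> ('g \<Rightarrow> 'g) set" where
  "full_group_commutator T G m i =
     derived (full_group_str T G m i) (carrier (full_group_str T G m i))"

definition covers :: "'g topology \<Rightarrow> 'g set \<Rightarrow> ('g \<Rightarrow> 'g \<Rightarrow> 'g) \<Rightarrow> ('g \<Rightarrow> 'g) \<Rightarrow> ('g \<Rightarrow> 'g) set \<Rightarrow> bool" where
  "covers T G m i \<Gamma> \<longleftrightarrow>
     (\<forall>g\<in>G. \<exists>U. full_bisection T G m i U \<and> g \<in> U \<and> bisect_map G m i U \<in> \<Gamma>)"

end

theory Submission
  imports Defs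
begin

text \<open>A non-isotropic arrow g lies in a compact open bisection B whose source and range sets
  are disjoint (ampleness and Hausdorffness of the unit space). Then
  B \<union> B\<inverse> \<union> (G0 - (src B \<union> rng B)) is a full bisection whose map is a compactly supported
  involution, a transposition. Products of full bisections realise compositions of their maps,
  and an isotropic arrow g factors as k\<inverse> (k g) with both factors non-isotropic as soon as the
  orbit of src g has a second point. For the commutator subgroup, a third orbit point z yields
  h : rng g \<rightarrow> z; taking the transposition A through g to fix z and a transposition C through h,
  g = h\<inverse> z h g lies in C A C A, whose map is the commutator of the two transpositions.\<close>

lemma card_ge_imp_not_subset:
  assumes "card_ge A n" "finite F" "card F < n"
  shows "\<not> A \<subseteq> F"
  using assms card_mono[of F A] finite_subset[of A F] unfolding card_ge_def by auto

lemma inj_on_Un_disjoint_images: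
  "inj_on f A \<Longrightarrow> inj_on f B \<Longrightarrow> f ` A \<inter> f ` B = {} \<Longrightarrow> inj_on f (A \<union> B)"
  by (auto simp: inj_on_Un)

lemma compact_supportI:
  assumes "{x \<in> units G m i. f x \<noteq> x} \<subseteq> K"
    and "closedin (subtopology T (units G m i)) K" "compactin (subtopology T (units G m i)) K"
  shows "compact_support T G m i f"
proof -
  have "subtopology T (units G m i) closure_of {x \<in> units G m i. f x \<noteq> x} \<subseteq> K"
    using assms(1,2) by (rule closure_of_minimal)
  then show ?thesis
    unfolding compact_support_def using closed_compactin[OF assms(3)] closedin_closure_of by blast
qed

lemma full_group_inv_involution:
  assumes "t \<in> full_group T G m i" "t \<circ> t = id"
  shows "inv\<^bsub>full_group_str T G m i\<^esub> t = t"
proof -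
  have "y = t" if "t \<circ> y = id" for y
    by (metis that assms(2) comp_assoc comp_id id_comp)
  then show ?thesis
    unfolding m_inv_def full_group_str_def using assms by (auto intro!: the_equality)
qed

lemma involution_commutator_in_full_group_commutator:
  assumes "s \<in> full_group T G m i" "s \<circ> s = id" "t \<in> full_group T G m i" "t \<circ> t = id"
  shows "s \<circ> t \<circ> s \<circ> t \<in> full_group_commutator T G m i"
proof -
  let ?M = "full_group_str T G m i"
  have "s \<otimes>\<^bsub>?M\<^esub> t \<otimes>\<^bsub>?M\<^esub> inv\<^bsub>?M\<^esub> s \<otimes>\<^bsub>?M\<^esub> inv\<^bsub>?M\<^esub> t \<in> derived_set ?M (carrier ?M)"
    using assms by (auto simp: full_group_str_def)
  moreover have "inv\<^bsub>?M\<^esub> s = s" "inv\<^bsub>?M\<^esub> t = t"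
    using assms by (simp_all add: full_group_inv_involution)
  ultimately have "s \<circ> t \<circ> s \<circ> t \<in> derived_set ?M (carrier ?M)"
    by (simp add: full_group_str_def)
  then show ?thesis
    unfolding full_group_commutator_def derived_def by (rule generate.incl)
qed

lemma full_group_commutator_comp:
  assumes "f \<in> full_group_commutator T G m i" "h \<in> full_group_commutator T G m i"
  shows "f \<circ> h \<in> full_group_commutator T G m i"
  using generate.eng[OF assms[unfolded full_group_commutator_def derived_def]]
  by (simp add: full_group_commutator_def derived_def full_group_str_def)

locale groupoid_structure =
  fixes G :: "'g set" and m :: "'g \<Rightarrow> 'g \<Rightarrow> 'g" and i :: "'g \<Rightarrow> 'g"
  assumes groupoid: "groupoid G m i"
begin

abbreviation "src \<equiv> gsrc m i"
abbreviation "rng \<equiv> grng m i"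
abbreviation "G0 \<equiv> units G m i"

lemma inv_closed: "g \<in> G \<Longrightarrow> i g \<in> G"
  and inv_inv: "g \<in> G \<Longrightarrow> i (i g) = g"
  using groupoid unfolding groupoid_def by auto

lemma
  assumes "g \<in> G" "h \<in> G" "src g = rng h"
  shows mult_closed: "m g h \<in> G"
    and src_mult: "src (m g h) = src h"
    and rng_mult: "rng (m g h) = rng g"
    and inv_mult_cancel_left: "m (i g) (m g h) = h"
    and mult_inv_cancel_right: "m (m g h) (i h) = g"
  using groupoid assms unfolding groupoid_def by auto

lemma rng_inv: "g \<in> G \<Longrightarrow> rng (i g) = src g"
  and src_inv: "g \<in> G \<Longrightarrow> src (i g) = rng g"
  by (simp_all add: gsrc_def grng_def inv_inv)

lemma rng_in_units: "g \<in> G \<Longrightarrow> rng g \<in> G0"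
  by (simp add: units_def)

lemma src_in_units: "g \<in> G \<Longrightarrow> src g \<in> G0"
  using rng_in_units[OF inv_closed] by (simp add: rng_inv)

lemma units_subset: "G0 \<subseteq> G"
proof
  fix x assume "x \<in> G0"
  then obtain g where "g \<in> G" "x = m g (i g)"
    by (auto simp: units_def grng_def)
  then show "x \<in> G"
    using mult_closed[OF _ inv_closed rng_inv[symmetric]] by simp
qed

lemma mult_rng_left: "g \<in> G \<Longrightarrow> m (rng g) g = g"
  using mult_inv_cancel_right[OF _ inv_closed rng_inv[symmetric], of g] by (simp add: grng_def inv_inv)

lemma
  assumes "x \<in> G0"
  shows rng_unit: "rng x = x" and src_unit: "src x = x" and inv_unit: "i x = x"
proof -
  obtain a where a: "a \<in> G" "x = rng a"
    using assms by (auto simp: units_def)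
  have "src a = rng (i a)"
    using a by (simp add: rng_inv)
  note a_inv = a(1) inv_closed[OF a(1)] this
  show "rng x = x"
    using rng_mult[OF a_inv] a by (simp add: grng_def)
  show src: "src x = x"
    using src_mult[OF a_inv] a by (simp add: grng_def src_inv)
  have "m (i x) (m x (i x)) = i x"
    using inv_mult_cancel_left[of x "i x"] assms units_subset by (auto simp: inv_closed rng_inv)
  then show "i x = x"
    using \<open>rng x = x\<close> src by (simp add: grng_def gsrc_def)
qed

definition mult_set :: "'g set \<Rightarrow> 'g set \<Rightarrow> 'g set" where
  "mult_set U V = {m u v | u v. u \<in> U \<and> v \<in> V \<and> src u = rng v}"

lemma mult_setI: "u \<in> U \<Longrightarrow> v \<in> V \<Longrightarrow> src u = rng v \<Longrightarrow> m u v \<in> mult_set U V"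
  unfolding mult_set_def by auto

lemma mult_setE:
  assumes "w \<in> mult_set U V"
  obtains u v where "u \<in> U" "v \<in> V" "src u = rng v" "w = m u v"
  using assms unfolding mult_set_def by auto

lemma mult_set_factorE:
  assumes "w \<in> mult_set U V" "U \<subseteq> G" "V \<subseteq> G"
  obtains u v where "u \<in> U" "v \<in> V" "src u = rng v" "w = m u v"
    and "w \<in> G" "src w = src v" "rng w = rng u"
proof -
  obtain u v where uv: "u \<in> U" "v \<in> V" "src u = rng v" "w = m u v"
    using assms(1) by (rule mult_setE)
  moreover have "u \<in> G" "v \<in> G"
    using uv assms(2,3) by auto
  ultimately show ?thesis
    by (intro that[of u v]) (simp_all add: mult_closed src_mult rng_mult)
qed

lemma inj_on_src_mult_set:
  assumes "U \<subseteq> G" "V \<subseteq> G" "inj_on src U" "inj_on src V"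
  shows "inj_on src (mult_set U V)"
proof (rule inj_onI)
  fix w w' assume "w \<in> mult_set U V" "w' \<in> mult_set U V" "src w = src w'"
  then show "w = w'"
    using assms(3,4) by (elim mult_set_factorE[OF _ assms(1,2)]) (metis inj_onD)
qed

lemma inj_on_rng_mult_set:
  assumes "U \<subseteq> G" "V \<subseteq> G" "inj_on rng U" "inj_on rng V"
  shows "inj_on rng (mult_set U V)"
proof (rule inj_onI)
  fix w w' assume "w \<in> mult_set U V" "w' \<in> mult_set U V" "rng w = rng w'"
  then show "w = w'"
    using assms(3,4) by (elim mult_set_factorE[OF _ assms(1,2)]) (metis inj_onD)
qed

lemma mem_mult_set_left_quotient:
  assumes "a \<in> U" "a \<in> G" "g \<in> G" "rng a = rng g" "m (i a) g \<in> V"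
  shows "g \<in> mult_set U V"
proof -
  have "src (i a) = rng g"
    using assms by (simp add: src_inv)
  then have "m a (m (i a) g) = g"
    using inv_mult_cancel_left[OF inv_closed[OF assms(2)] assms(3)] assms(2) by (simp add: inv_inv)
  moreover have "src a = rng (m (i a) g)"
    using assms \<open>src (i a) = rng g\<close> by (simp add: rng_mult rng_inv inv_closed)
  ultimately show ?thesis
    using mult_setI[OF assms(1,5)] by simp
qed

lemma mem_mult_set_conjugate:
  assumes "g \<in> A" "h \<in> C" "i h \<in> C" "rng h \<in> A" "src h = rng g" "A \<subseteq> G" "C \<subseteq> G"
  shows "g \<in> mult_set C (mult_set A (mult_set C A))"
proof -
  have G: "g \<in> G" "h \<in> G"
    using assms by auto
  have hg: "m h g \<in> G" "rng (m h g) = rng h"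
    using G assms(5) by (simp_all add: mult_closed rng_mult)
  have unit: "rng h \<in> G" "src (rng h) = rng h" "rng (rng h) = rng h"
    using rng_in_units[OF G(2)] units_subset by (auto simp: src_unit rng_unit)
  have "m h g \<in> mult_set C A"
    using assms by (simp add: mult_setI)
  then have "m (rng h) (m h g) \<in> mult_set A (mult_set C A)"
    using assms(4) hg unit by (simp add: mult_setI)
  moreover have "m (rng h) (m h g) = m h g"
    using mult_rng_left[OF hg(1)] hg(2) by simp
  ultimately have "m (i h) (m h g) \<in> mult_set C (mult_set A (mult_set C A))"
    using assms(3) hg G by (simp add: mult_setI src_inv)
  then show ?thesis
    using inv_mult_cancel_left[OF G(2,1) assms(5)] by simp
qed

definition transposition :: "'g set \<Rightarrow> 'g set" where
  "transposition B = B \<union> i ` B \<union> (G0 - (src ` B \<union> rng ` B))"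

lemma src_image_inv: "B \<subseteq> G \<Longrightarrow> src ` i ` B = rng ` B"
  and rng_image_inv: "B \<subseteq> G \<Longrightarrow> rng ` i ` B = src ` B"
  unfolding image_image by (auto simp: src_inv rng_inv intro!: image_cong)

lemma
  assumes "B \<subseteq> G"
  shows transposition_subset: "transposition B \<subseteq> G"
    and src_image_transposition: "src ` transposition B = G0"
    and rng_image_transposition: "rng ` transposition B = G0"
    and inv_transposition: "a \<in> transposition B \<Longrightarrow> i a \<in> transposition B"
proof -
  define P where "P = G0 - (src ` B \<union> rng ` B)"
  have U: "transposition B = B \<union> i ` B \<union> P"
    by (simp add: transposition_def P_def)
  have P: "src ` P = P" "rng ` P = P" "P \<subseteq> G"
    using units_subset by (force simp: P_def src_unit rng_unit)+
  have "src ` B \<union> rng ` B \<subseteq> G0"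
    using assms src_in_units rng_in_units by auto
  then show "src ` transposition B = G0" "rng ` transposition B = G0"
    unfolding U image_Un src_image_inv[OF assms] rng_image_inv[OF assms] P by (auto simp: P_def)
  show "transposition B \<subseteq> G"
    unfolding U using assms P(3) inv_closed by auto
  show "i a \<in> transposition B" if "a \<in> transposition B"
    using that assms units_subset unfolding transposition_def by (force simp: inv_inv inv_unit)
qed

lemma
  assumes "B \<subseteq> G" "inj_on src B" "inj_on rng B" and disjoint: "src ` B \<inter> rng ` B = {}"
  shows inj_on_src_transposition: "inj_on src (transposition B)"
    and inj_on_rng_transposition: "inj_on rng (transposition B)"
proof -
  define P where "P = G0 - (src ` B \<union> rng ` B)"
  have U: "transposition B = B \<union> i ` B \<union> P"
    by (simp add: transposition_def P_def)
  have P: "src ` P = P" "rng ` P = P" "inj_on src P" "inj_on rng P"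
    by (force simp: P_def src_unit rng_unit inj_on_def)+
  have P_disjoint: "(src ` B \<union> rng ` B) \<inter> P = {}"
    by (auto simp: P_def)
  have "inj_on (src \<circ> i) B" "inj_on (rng \<circ> i) B"
    using assms(1-3) by (auto simp: inj_on_def src_inv rng_inv subset_iff)
  then have inj_iB: "inj_on src (i ` B)" "inj_on rng (i ` B)"
    by (simp_all add: inj_on_imageI)
  show "inj_on src (transposition B)"
    unfolding U
  proof (intro inj_on_Un_disjoint_images assms(2) inj_iB(1) P(3))
    show "src ` B \<inter> src ` i ` B = {}"
      using disjoint by (simp add: src_image_inv[OF assms(1)])
    show "src ` (B \<union> i ` B) \<inter> src ` P = {}"
      using P_disjoint by (simp add: image_Un src_image_inv[OF assms(1)] P(1))
  qed
  show "inj_on rng (transposition B)"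
    unfolding U
  proof (intro inj_on_Un_disjoint_images assms(3) inj_iB(2) P(4))
    show "rng ` B \<inter> rng ` i ` B = {}"
      using disjoint by (auto simp: rng_image_inv[OF assms(1)])
    show "rng ` (B \<union> i ` B) \<inter> rng ` P = {}"
      using P_disjoint by (auto simp: image_Un rng_image_inv[OF assms(1)] P(2))
  qed
qed

end

locale etale_groupoid =
  fixes T :: "'g topology" and G :: "'g set" and m :: "'g \<Rightarrow> 'g \<Rightarrow> 'g" and i :: "'g \<Rightarrow> 'g"
  assumes etale: "etale T G m i"

sublocale etale_groupoid \<subseteq> groupoid_structure G m i
  using etale by unfold_locales (simp add: etale_def top_groupoid_def)

context etale_groupoid
begin

lemma topspace_eq: "topspace T = G"
  and continuous_map_mult:
    "continuous_map (subtopology (prod_topology T T) (composable G m i)) T (\<lambda>(g, h). m g h)"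
  and continuous_map_inv: "continuous_map T T i"
  using etale unfolding etale_def top_groupoid_def by auto

lemma openin_imp_subset: "openin T V \<Longrightarrow> V \<subseteq> G"
  using openin_subset topspace_eq by blast

lemma continuous_map_mult_composable:
  assumes "continuous_map X T f" "continuous_map X T h"
    and "\<And>x. x \<in> topspace X \<Longrightarrow> src (f x) = rng (h x)"
  shows "continuous_map X T (\<lambda>x. m (f x) (h x))"
proof -
  have "(f x, h x) \<in> composable G m i" if "x \<in> topspace X" for x
    using assms that by (auto simp: composable_def continuous_map_def topspace_eq)
  then have "continuous_map X (subtopology (prod_topology T T) (composable G m i)) (\<lambda>x. (f x, h x))"
    using assms(1,2) by (auto intro: continuous_map_into_subtopology continuous_map_pairedI)
  from continuous_map_compose[OF this continuous_map_mult] show ?thesis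
    by (simp add: o_def)
qed

lemma continuous_map_rng: "continuous_map T T rng"
proof -
  have "continuous_map T T (\<lambda>g. m g (i g))"
    by (rule continuous_map_mult_composable[OF continuous_map_id[unfolded id_def] continuous_map_inv])
      (simp add: topspace_eq rng_inv)
  then show ?thesis
    by (simp add: grng_def[abs_def])
qed

lemma continuous_map_src: "continuous_map T T src"
  using continuous_map_compose[OF continuous_map_inv continuous_map_rng]
  by (rule continuous_map_eq) (simp add: topspace_eq rng_inv)

lemma openin_preimage: "openin T V \<Longrightarrow> continuous_map T T f \<Longrightarrow> openin T {a \<in> G. f a \<in> V}"
  using openin_continuous_map_preimage[of T T f V] by (simp add: topspace_eq)

lemma openin_inv_image:
  assumes "openin T V"
  shows "openin T (i ` V)"
proof -
  have "i ` V = {a \<in> G. i a \<in> V}"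
    using openin_imp_subset[OF assms] inv_closed inv_inv by auto (metis image_eqI)
  then show ?thesis
    using openin_preimage[OF assms continuous_map_inv] by simp
qed

lemma rng_local_homeomorphism:
  "g \<in> G \<Longrightarrow> \<exists>W. openin T W \<and> g \<in> W \<and> openin (subtopology T G0) (rng ` W) \<and>
     homeomorphic_map (subtopology T W) (subtopology T (rng ` W)) rng"
  using etale unfolding etale_def by blast

lemma openin_units: "openin T G0"
proof (subst openin_subopen, intro ballI)
  fix x assume x: "x \<in> G0"
  then obtain W where W: "openin T W" "x \<in> W"
      "homeomorphic_map (subtopology T W) (subtopology T (rng ` W)) rng"
    using rng_local_homeomorphism units_subset by blast
  have inj: "inj_on rng W"
    using homeomorphic_imp_injective_map[OF W(3)] openin_imp_subset[OF W(1)]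
    by (simp add: topspace_eq Int_absorb1)
  define N where "N = W \<inter> {a \<in> G. rng a \<in> W}"
  have "openin T N"
    unfolding N_def using W(1) openin_preimage[OF W(1) continuous_map_rng] by blast
  moreover have "x \<in> N"
    using x W(2) units_subset by (auto simp: N_def rng_unit)
  moreover have "N \<subseteq> G0"
  proof
    fix a assume a: "a \<in> N"
    then have "a = rng a"
      using inj_onD[OF inj, of a "rng a"] by (auto simp: N_def rng_unit rng_in_units)
    then show "a \<in> G0"
      using a rng_in_units by (metis N_def IntD2 mem_Collect_eq)
  qed
  ultimately show "\<exists>N. openin T N \<and> x \<in> N \<and> N \<subseteq> G0"
    by blast
qed

lemma rng_local_section:
  assumes "openin T V" "g \<in> V"
  obtains W \<psi> where "openin T W" "g \<in> W" "W \<subseteq> V" "openin T (rng ` W)"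
    and "continuous_map (subtopology T (rng ` W)) T \<psi>" "\<And>a. a \<in> W \<Longrightarrow> \<psi> (rng a) = a"
proof -
  obtain W0 where W0: "openin T W0" "g \<in> W0" "openin (subtopology T G0) (rng ` W0)"
      "homeomorphic_map (subtopology T W0) (subtopology T (rng ` W0)) rng"
    using rng_local_homeomorphism openin_imp_subset assms by blast
  obtain \<psi> where \<psi>: "homeomorphic_maps (subtopology T W0) (subtopology T (rng ` W0)) rng \<psi>"
    using W0(4) homeomorphic_map_maps by blast
  define W where "W = W0 \<inter> V"
  have W: "openin T W" "W \<subseteq> W0"
    using W0(1) assms(1) by (auto simp: W_def)
  have "openin (subtopology T (rng ` W0)) (rng ` W)"
    using homeomorphic_imp_open_map[OF W0(4)] W unfolding open_map_def
    by (simp add: openin_open_subtopology[OF W0(1)])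
  moreover have "openin T (rng ` W0)"
    using W0(3) openin_units openin_trans_full by blast
  ultimately have "openin T (rng ` W)"
    using openin_trans_full by blast
  moreover have "continuous_map (subtopology T (rng ` W)) T \<psi>"
    using \<psi> W(2) unfolding homeomorphic_maps_def
    by (meson continuous_map_from_subtopology_mono continuous_map_into_fulltopology image_mono)
  moreover have "\<psi> (rng a) = a" if "a \<in> W" for a
    using \<psi> that W(2) openin_imp_subset[OF W0(1)] unfolding homeomorphic_maps_def
    by (auto simp: topspace_eq)
  ultimately show ?thesis
    using that W(1) W0(2) assms(2) by (auto simp: W_def)
qed

lemma src_local_injective:
  assumes "g \<in> G"
  obtains W where "openin T W" "g \<in> W" "inj_on src W"
proof -
  have "openin T G"
    using openin_topspace[of T] by (simp add: topspace_eq)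
  then obtain W \<psi> where W: "openin T W" "i g \<in> W" "\<And>a. a \<in> W \<Longrightarrow> \<psi> (rng a) = a"
    using rng_local_section[of G "i g"] assms inv_closed by metis
  have "inj_on (src \<circ> i) W"
    using W(3) openin_imp_subset[OF W(1)] by (intro inj_on_inverseI[of _ \<psi>]) (auto simp: src_inv)
  then show ?thesis
    using that[of "i ` W"] openin_inv_image[OF W(1)] W(2) assms
    by (metis inj_on_imageI inv_inv image_eqI)
qed

lemma rng_preimage_compact_open:
  assumes W: "openin T W" and \<psi>: "continuous_map (subtopology T (rng ` W)) T \<psi>"
      "\<And>a. a \<in> W \<Longrightarrow> \<psi> (rng a) = a"
    and K: "openin T K" "compactin T K" "K \<subseteq> rng ` W"
  shows "openin T {a \<in> W. rng a \<in> K}" and "compactin T {a \<in> W. rng a \<in> K}"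
proof -
  have "{a \<in> W. rng a \<in> K} = W \<inter> {a \<in> G. rng a \<in> K}"
    using openin_imp_subset[OF W] by auto
  then show "openin T {a \<in> W. rng a \<in> K}"
    using openin_Int[OF W openin_preimage[OF K(1) continuous_map_rng]] by simp
  have "{a \<in> W. rng a \<in> K} = \<psi> ` K"
  proof
    show "{a \<in> W. rng a \<in> K} \<subseteq> \<psi> ` K"
      using \<psi>(2) by force
    show "\<psi> ` K \<subseteq> {a \<in> W. rng a \<in> K}"
      using K(3) \<psi>(2) by auto
  qed
  then show "compactin T {a \<in> W. rng a \<in> K}"
    using image_compactin[OF _ \<psi>(1)] K(2,3) by (simp add: compactin_subtopology)
qed

definition compact_open_bisection :: "'g set \<Rightarrow> bool" where
  "compact_open_bisection B \<longleftrightarrow> openin T B \<and> compactin T B \<and> inj_on src B \<and> inj_on rng B"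

lemma full_bisection_subset: "full_bisection T G m i U \<Longrightarrow> U \<subseteq> G"
  by (simp add: full_bisection_def)

lemma full_bisection_obtain_src:
  assumes "full_bisection T G m i U" "x \<in> G0"
  obtains a where "a \<in> U" "src a = x"
  using assms unfolding full_bisection_def by (metis imageE)

lemma full_bisection_obtain_rng:
  assumes "full_bisection T G m i U" "x \<in> G0"
  obtains a where "a \<in> U" "rng a = x"
  using assms unfolding full_bisection_def by (metis imageE)

lemma bisect_map_src:
  assumes "full_bisection T G m i U" "a \<in> U"
  shows "bisect_map G m i U (src a) = rng a"
proof -
  have "(THE b. b \<in> U \<and> src b = src a) = a"
    using assms unfolding full_bisection_def by (auto intro!: the_equality dest: inj_onD)
  then show ?thesis
    using assms src_in_units full_bisection_subset by (auto simp: bisect_map_def)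
qed

lemma bisect_map_involution:
  assumes "full_bisection T G m i U" "\<And>a. a \<in> U \<Longrightarrow> i a \<in> U"
  shows "bisect_map G m i U \<circ> bisect_map G m i U = id"
proof
  fix x
  show "(bisect_map G m i U \<circ> bisect_map G m i U) x = id x"
  proof (cases "x \<in> G0")
    case True
    then obtain a where a: "a \<in> U" "src a = x"
      using full_bisection_obtain_src assms(1) by blast
    then have "a \<in> G"
      using full_bisection_subset assms(1) by blast
    then show ?thesis
      using bisect_map_src[OF assms(1) a(1)] bisect_map_src[OF assms(1) assms(2)[OF a(1)]] a
      by (simp add: src_inv rng_inv)
  qed (simp add: bisect_map_def)
qed

lemma local_range_lift:
  assumes "openin T U" "u \<in> U"
  obtains D \<phi> where "openin T D" "continuous_map (subtopology T D) T \<phi>"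
    and "\<And>g. g \<in> G \<Longrightarrow> rng g = rng u \<Longrightarrow> g \<in> D \<and> \<phi> g = u"
    and "\<And>g. g \<in> D \<Longrightarrow> \<phi> g \<in> U \<and> rng (\<phi> g) = rng g"
proof -
  obtain W \<psi> where W: "openin T W" "u \<in> W" "W \<subseteq> U" "openin T (rng ` W)"
    and \<psi>: "continuous_map (subtopology T (rng ` W)) T \<psi>" "\<And>a. a \<in> W \<Longrightarrow> \<psi> (rng a) = a"
    using rng_local_section[OF assms] by blast
  define D where "D = {g \<in> G. rng g \<in> rng ` W}"
  have "openin T D"
    unfolding D_def by (rule openin_preimage[OF W(4) continuous_map_rng])
  moreover have "continuous_map (subtopology T D) (subtopology T (rng ` W)) rng"
    by (auto simp: continuous_map_in_subtopology D_def topspace_eq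
        intro: continuous_map_from_subtopology continuous_map_rng)
  then have "continuous_map (subtopology T D) T (\<psi> \<circ> rng)"
    using \<psi>(1) by (rule continuous_map_compose)
  moreover have "g \<in> D \<and> \<psi> (rng g) = u" if "g \<in> G" "rng g = rng u" for g
    using that W(2) \<psi>(2) by (auto simp: D_def)
  moreover have "\<psi> (rng g) \<in> U \<and> rng (\<psi> (rng g)) = rng g" if "g \<in> D" for g
    using that W(3) \<psi>(2) by (auto simp: D_def)
  ultimately show ?thesis
    using that[of D "\<psi> \<circ> rng"] by simp
qed

lemma openin_mult_set:
  assumes U: "openin T U" and V: "openin T V"
  shows "openin T (mult_set U V)"
proof (subst openin_subopen, intro ballI)
  fix w assume "w \<in> mult_set U V"
  then obtain u v where uv: "u \<in> U" "v \<in> V" "src u = rng v" "w = m u v"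
    by (rule mult_setE)
  have uG: "u \<in> G" and vG: "v \<in> G"
    using uv U V openin_imp_subset by auto
  obtain D \<phi> where D: "openin T D" "continuous_map (subtopology T D) T \<phi>"
    and \<phi>_fibre: "\<And>g. g \<in> G \<Longrightarrow> rng g = rng u \<Longrightarrow> g \<in> D \<and> \<phi> g = u"
    and \<phi>: "\<And>g. g \<in> D \<Longrightarrow> \<phi> g \<in> U \<and> rng (\<phi> g) = rng g"
    using local_range_lift[OF U uv(1)] by blast
  have \<phi>G: "\<phi> g \<in> G" if "g \<in> D" for g
    using \<phi>[OF that] openin_imp_subset[OF U] by blast
  define F where "F g = m (i (\<phi> g)) g" for g
  have "continuous_map (subtopology T D) T F"
    unfolding F_def
  proof (rule continuous_map_mult_composable)
    show "continuous_map (subtopology T D) T (\<lambda>g. i (\<phi> g))"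
      using continuous_map_compose[OF D(2) continuous_map_inv] by (simp add: o_def)
    show "continuous_map (subtopology T D) T (\<lambda>g. g)"
      by (rule continuous_map_from_subtopology[OF continuous_map_id[unfolded id_def]])
    show "src (i (\<phi> g)) = rng g" if "g \<in> topspace (subtopology T D)" for g
      using that \<phi> \<phi>G by (simp add: src_inv)
  qed
  then have "openin (subtopology T D) {g \<in> topspace (subtopology T D). F g \<in> V}"
    using openin_continuous_map_preimage V by blast
  then have "openin T {g \<in> D. F g \<in> V}"
    using D(1) openin_trans_full openin_imp_subset[OF D(1)] by (simp add: topspace_eq Int_absorb1)
  moreover have "w \<in> {g \<in> D. F g \<in> V}"
    using \<phi>_fibre[of w] uv uG vG
    by (simp add: F_def mult_closed rng_mult inv_mult_cancel_left)
  moreover have "g \<in> mult_set U V" if "g \<in> D" "F g \<in> V" for g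
    using mem_mult_set_left_quotient[of "\<phi> g" U g V] that \<phi> \<phi>G openin_imp_subset[OF D(1)]
    by (auto simp: F_def)
  ultimately show "\<exists>N. openin T N \<and> w \<in> N \<and> N \<subseteq> mult_set U V"
    by blast
qed

lemma full_bisection_obtain_composable:
  assumes "full_bisection T G m i U" "full_bisection T G m i V" "x \<in> G0"
  obtains u v where "u \<in> U" "v \<in> V" "src u = rng v" "src v = x"
proof -
  obtain v where v: "v \<in> V" "src v = x"
    using full_bisection_obtain_src[OF assms(2,3)] .
  then have "rng v \<in> G0"
    using full_bisection_subset[OF assms(2)] rng_in_units by blast
  then obtain u where "u \<in> U" "src u = rng v"
    using full_bisection_obtain_src[OF assms(1)] by blast
  then show ?thesis
    using that v by blast
qed

lemma src_image_mult_set: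
  assumes U: "full_bisection T G m i U" and V: "full_bisection T G m i V"
  shows "src ` mult_set U V = G0"
proof
  show "src ` mult_set U V \<subseteq> G0"
    using U V full_bisection_subset src_in_units by (blast elim: mult_set_factorE)
  show "G0 \<subseteq> src ` mult_set U V"
  proof
    fix x assume "x \<in> G0"
    then obtain u v where "u \<in> U" "v \<in> V" "src u = rng v" "src v = x"
      using full_bisection_obtain_composable[OF U V] by blast
    then show "x \<in> src ` mult_set U V"
      using U V full_bisection_subset by (metis image_eqI mult_setI src_mult subsetD)
  qed
qed

lemma rng_image_mult_set:
  assumes U: "full_bisection T G m i U" and V: "full_bisection T G m i V"
  shows "rng ` mult_set U V = G0"
proof
  show "rng ` mult_set U V \<subseteq> G0"
    using U V full_bisection_subset rng_in_units by (blast elim: mult_set_factorE)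
  show "G0 \<subseteq> rng ` mult_set U V"
  proof
    fix x assume "x \<in> G0"
    then obtain u where u: "u \<in> U" "rng u = x"
      using full_bisection_obtain_rng[OF U] by blast
    then obtain v where "v \<in> V" "rng v = src u"
      using full_bisection_obtain_rng[OF V] src_in_units full_bisection_subset[OF U] by blast
    then show "x \<in> rng ` mult_set U V"
      using u U V full_bisection_subset by (metis image_eqI mult_setI rng_mult subsetD)
  qed
qed

lemma full_bisection_mult_set:
  assumes U: "full_bisection T G m i U" and V: "full_bisection T G m i V"
  shows "full_bisection T G m i (mult_set U V)"
proof -
  have "U \<subseteq> G" "V \<subseteq> G"
    using U V by (simp_all add: full_bisection_subset)
  then have "mult_set U V \<subseteq> G"
    by (blast elim: mult_set_factorE)
  then show ?thesis
    using U V openin_mult_set inj_on_src_mult_set inj_on_rng_mult_set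
      src_image_mult_set[OF U V] rng_image_mult_set[OF U V]
    unfolding full_bisection_def by simp
qed

lemma bisect_map_mult_set:
  assumes U: "full_bisection T G m i U" and V: "full_bisection T G m i V"
  shows "bisect_map G m i (mult_set U V) = bisect_map G m i U \<circ> bisect_map G m i V"
proof
  fix x
  show "bisect_map G m i (mult_set U V) x = (bisect_map G m i U \<circ> bisect_map G m i V) x"
  proof (cases "x \<in> G0")
    case True
    then obtain u v where uv: "u \<in> U" "v \<in> V" "src u = rng v" "src v = x"
      using full_bisection_obtain_composable[OF U V] by blast
    then have "u \<in> G" "v \<in> G"
      using U V full_bisection_subset by auto
    then show ?thesis
      using bisect_map_src[OF full_bisection_mult_set[OF U V] mult_setI[OF uv(1-3)]]
        bisect_map_src[OF U uv(1)] bisect_map_src[OF V uv(2)] uv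
      by (simp add: src_mult rng_mult)
  qed (simp add: bisect_map_def)
qed

lemma compact_support_comp:
  assumes "compact_support T G m i f" "compact_support T G m i h"
  shows "compact_support T G m i (f \<circ> h)"
proof -
  define S where "S \<phi> = subtopology T G0 closure_of {x \<in> G0. \<phi> x \<noteq> x}" for \<phi> :: "'g \<Rightarrow> 'g"
  have moved: "{x \<in> G0. \<phi> x \<noteq> x} \<subseteq> S \<phi>" for \<phi>
    unfolding S_def using units_subset by (intro closure_of_subset) (auto simp: topspace_eq)
  have "{x \<in> G0. (f \<circ> h) x \<noteq> x} \<subseteq> S f \<union> S h"
  proof
    fix x assume "x \<in> {x \<in> G0. (f \<circ> h) x \<noteq> x}"
    then show "x \<in> S f \<union> S h"
      using moved[of f] moved[of h] by (cases "h x = x") auto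
  qed
  moreover have "closedin (subtopology T G0) (S f \<union> S h)"
    unfolding S_def by (intro closedin_Un closedin_closure_of)
  moreover have "compactin (subtopology T G0) (S f \<union> S h)"
    using assms unfolding S_def compact_support_def by (rule compactin_Un)
  ultimately show ?thesis
    by (rule compact_supportI)
qed

lemma bisect_map_in_full_group:
  "full_bisection T G m i U \<Longrightarrow> compact_support T G m i (bisect_map G m i U) \<Longrightarrow>
     bisect_map G m i U \<in> full_group T G m i"
  unfolding full_group_def by auto

lemma full_group_comp:
  assumes "f \<in> full_group T G m i" "h \<in> full_group T G m i"
  shows "f \<circ> h \<in> full_group T G m i"
proof -
  obtain U V where "full_bisection T G m i U" "f = bisect_map G m i U" "compact_support T G m i f"
    and "full_bisection T G m i V" "h = bisect_map G m i V" "compact_support T G m i h"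
    using assms unfolding full_group_def by blast
  then show ?thesis
    by (metis bisect_map_in_full_group full_bisection_mult_set bisect_map_mult_set
        compact_support_comp)
qed

lemma covers_if_non_isotropic_covered:
  assumes comp_closed: "\<And>f h. f \<in> \<Gamma> \<Longrightarrow> h \<in> \<Gamma> \<Longrightarrow> f \<circ> h \<in> \<Gamma>"
    and non_isotropic: "\<And>g. g \<in> G \<Longrightarrow> src g \<noteq> rng g \<Longrightarrow>
        \<exists>U. full_bisection T G m i U \<and> g \<in> U \<and> bisect_map G m i U \<in> \<Gamma>"
    and orbit_nontrivial: "\<And>x. x \<in> G0 \<Longrightarrow> \<not> orbit G m i x \<subseteq> {x}"
  shows "covers T G m i \<Gamma>"
  unfolding covers_def
proof
  fix g assume g: "g \<in> G"
  show "\<exists>U. full_bisection T G m i U \<and> g \<in> U \<and> bisect_map G m i U \<in> \<Gamma>"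
  proof (cases "src g = rng g")
    case isotropic: True
    obtain k where k: "k \<in> G" "src k = src g" "rng k \<noteq> src g"
      using orbit_nontrivial[OF src_in_units[OF g]] unfolding orbit_def by blast
    then have kg: "src k = rng g"
      using isotropic by simp
    obtain V where V: "full_bisection T G m i V" "m k g \<in> V" "bisect_map G m i V \<in> \<Gamma>"
      using non_isotropic[OF mult_closed[OF k(1) g kg]] k g kg by (auto simp: src_mult rng_mult)
    obtain U where U: "full_bisection T G m i U" "i k \<in> U" "bisect_map G m i U \<in> \<Gamma>"
      using non_isotropic[OF inv_closed[OF k(1)]] k by (auto simp: src_inv rng_inv)
    have "m (i k) (m k g) \<in> mult_set U V"
      using U(2) V(2) k g kg by (intro mult_setI) (auto simp: src_inv rng_mult)
    then have "g \<in> mult_set U V"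
      by (simp add: inv_mult_cancel_left[OF k(1) g kg])
    then show ?thesis
      using U V comp_closed full_bisection_mult_set bisect_map_mult_set by metis
  qed (use non_isotropic g in blast)
qed

end

locale ample_groupoid =
  fixes T :: "'g topology" and G :: "'g set" and m :: "'g \<Rightarrow> 'g \<Rightarrow> 'g" and i :: "'g \<Rightarrow> 'g"
  assumes ample: "ample T G m i"

sublocale ample_groupoid \<subseteq> etale_groupoid
  using ample by unfold_locales (simp add: ample_def)

context ample_groupoid
begin

lemma Hausdorff_units: "Hausdorff_space (subtopology T G0)"
  using ample by (simp add: ample_def)

lemma compact_open_units_basis:
  assumes "openin T W" "W \<subseteq> G0" "x \<in> W"
  obtains K where "openin T K" "compactin T K" "x \<in> K" "K \<subseteq> W"
proof -
  have "openin (subtopology T G0) W"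
    using assms by (simp add: openin_open_subtopology[OF openin_units])
  then obtain K where K: "openin (subtopology T G0) K" "compactin T K" "x \<in> K" "K \<subseteq> W"
    using ample assms(3) unfolding ample_def by blast
  then show ?thesis
    using that openin_trans_full[OF K(1) openin_units] by blast
qed

lemma closedin_units_if_compactin:
  "compactin T K \<Longrightarrow> K \<subseteq> G0 \<Longrightarrow> closedin (subtopology T G0) K"
  using compactin_imp_closedin[OF Hausdorff_units, of K] by (simp add: compactin_subtopology)

lemma openin_units_delete:
  assumes "x \<in> G0"
  shows "openin T (G0 - {x})"
proof -
  have top: "topspace (subtopology T G0) = G0"
    using units_subset by (simp add: topspace_eq Int_absorb1)
  have "x \<in> topspace (subtopology T G0)"
    using assms unfolding top .
  then have closed: "closedin (subtopology T G0) {x}"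
    using Hausdorff_imp_t1_space[OF Hausdorff_units] unfolding t1_space_closedin_singleton by blast
  have "openin (subtopology T G0) (G0 - {x})"
    using openin_diff[OF openin_topspace[of "subtopology T G0"] closed] unfolding top .
  then show ?thesis
    by (rule openin_trans_full[OF _ openin_units])
qed

lemma exists_compact_open_bisection:
  assumes "g \<in> G" "openin T O1" "openin T O2" "src g \<in> O1" "rng g \<in> O2"
  obtains B where "compact_open_bisection B" "g \<in> B" "src ` B \<subseteq> O1" "rng ` B \<subseteq> O2"
proof -
  obtain W0 where W0: "openin T W0" "g \<in> W0" "inj_on src W0"
    using src_local_injective[OF assms(1)] .
  define V where "V = W0 \<inter> {a \<in> G. src a \<in> O1} \<inter> {a \<in> G. rng a \<in> O2}"
  have V: "openin T V"
    unfolding V_def using W0(1) openin_preimage[OF assms(2) continuous_map_src]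
      openin_preimage[OF assms(3) continuous_map_rng] by (intro openin_Int)
  have gV: "g \<in> V"
    using assms W0(2) by (simp add: V_def)
  obtain W \<psi> where W: "openin T W" "g \<in> W" "W \<subseteq> V" "openin T (rng ` W)"
    and \<psi>: "continuous_map (subtopology T (rng ` W)) T \<psi>" "\<And>a. a \<in> W \<Longrightarrow> \<psi> (rng a) = a"
    using rng_local_section[OF V gV] by blast
  have "rng ` W \<subseteq> G0"
    using openin_imp_subset[OF W(1)] rng_in_units by auto
  then obtain K where K: "openin T K" "compactin T K" "rng g \<in> K" "K \<subseteq> rng ` W"
    using compact_open_units_basis[OF W(4)] W(2) by blast
  define B where "B = {a \<in> W. rng a \<in> K}"
  have "openin T B" "compactin T B"
    unfolding B_def using rng_preimage_compact_open[OF W(1) \<psi> K(1,2,4)] by auto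
  moreover have "inj_on src B"
    using W0(3) by (rule inj_on_subset) (use W(3) in \<open>auto simp: B_def V_def\<close>)
  moreover have "inj_on rng B"
    using \<psi>(2) by (intro inj_on_inverseI[of _ \<psi>]) (simp add: B_def)
  moreover have "g \<in> B" "src ` B \<subseteq> O1" "rng ` B \<subseteq> O2"
    using W(2,3) K(3) by (auto simp: B_def V_def)
  ultimately show ?thesis
    using that unfolding compact_open_bisection_def by blast
qed

lemma non_isotropic_compact_open_bisection:
  assumes "g \<in> G" "src g \<noteq> rng g" "openin T N" "src g \<in> N" "rng g \<in> N"
  obtains B where "compact_open_bisection B" "g \<in> B" "src ` B \<inter> rng ` B = {}"
    "src ` B \<union> rng ` B \<subseteq> N"
proof -
  obtain O1 O2 where O: "openin (subtopology T G0) O1" "openin (subtopology T G0) O2"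
    "src g \<in> O1" "rng g \<in> O2" "disjnt O1 O2"
  proof -
    have "src g \<in> topspace (subtopology T G0)" "rng g \<in> topspace (subtopology T G0)"
      using assms(1) src_in_units rng_in_units units_subset by (auto simp: topspace_eq)
    with Hausdorff_units assms(2) have "\<exists>U V. openin (subtopology T G0) U \<and>
        openin (subtopology T G0) V \<and> src g \<in> U \<and> rng g \<in> V \<and> disjnt U V"
      unfolding Hausdorff_space_def by blast
    then show ?thesis
      using that by blast
  qed
  then have "openin T (O1 \<inter> N)" "openin T (O2 \<inter> N)"
    using openin_Int[OF openin_trans_full[OF _ openin_units] assms(3)] by blast+
  then obtain B where B: "compact_open_bisection B" "g \<in> B"
    "src ` B \<subseteq> O1 \<inter> N" "rng ` B \<subseteq> O2 \<inter> N"
    using exists_compact_open_bisection[OF assms(1)] O(3,4) assms(4,5) by blast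
  moreover have "src ` B \<inter> rng ` B = {}"
    using B(3,4) O(5) unfolding disjnt_def by blast
  ultimately show ?thesis
    using that by blast
qed

lemma compact_open_bisectionD:
  assumes "compact_open_bisection B"
  shows "B \<subseteq> G" and "src ` B \<union> rng ` B \<subseteq> G0"
    and "compactin (subtopology T G0) (src ` B \<union> rng ` B)"
    and "closedin (subtopology T G0) (src ` B \<union> rng ` B)"
proof -
  show BG: "B \<subseteq> G"
    using assms openin_imp_subset unfolding compact_open_bisection_def by blast
  then show units: "src ` B \<union> rng ` B \<subseteq> G0"
    using src_in_units rng_in_units by auto
  have "compactin T B"
    using assms by (simp add: compact_open_bisection_def)
  then have "compactin T (src ` B \<union> rng ` B)"
    by (intro compactin_Un image_compactin[OF _ continuous_map_src] image_compactin[OF _ continuous_map_rng])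
  then show "compactin (subtopology T G0) (src ` B \<union> rng ` B)"
    and "closedin (subtopology T G0) (src ` B \<union> rng ` B)"
    using units closedin_units_if_compactin by (simp_all add: compactin_subtopology)
qed

lemma openin_transposition:
  assumes "compact_open_bisection B"
  shows "openin T (transposition B)"
proof -
  have "openin (subtopology T G0) (G0 - (src ` B \<union> rng ` B))"
    using openin_diff[OF openin_topspace compact_open_bisectionD(4)[OF assms]] units_subset
    by (simp add: topspace_eq Int_absorb1)
  then have "openin T (G0 - (src ` B \<union> rng ` B))"
    by (rule openin_trans_full[OF _ openin_units])
  moreover have "openin T B"
    using assms by (simp add: compact_open_bisection_def)
  ultimately show ?thesis
    unfolding transposition_def by (intro openin_Un openin_inv_image)
qed

lemma full_bisection_transposition:
  assumes "compact_open_bisection B" "src ` B \<inter> rng ` B = {}"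
  shows "full_bisection T G m i (transposition B)"
proof -
  have "B \<subseteq> G" "inj_on src B" "inj_on rng B"
    using assms(1) compact_open_bisectionD(1) by (auto simp: compact_open_bisection_def)
  then show ?thesis
    using assms openin_transposition transposition_subset src_image_transposition
      rng_image_transposition inj_on_src_transposition inj_on_rng_transposition
    unfolding full_bisection_def by simp
qed

lemma compact_support_transposition:
  assumes "compact_open_bisection B" "src ` B \<inter> rng ` B = {}"
  shows "compact_support T G m i (bisect_map G m i (transposition B))"
proof (rule compact_supportI)
  have "bisect_map G m i (transposition B) x = x" if "x \<in> G0" "x \<notin> src ` B \<union> rng ` B" for x
    using bisect_map_src[OF full_bisection_transposition[OF assms], of x] that
    by (simp add: transposition_def src_unit rng_unit)
  then show "{x \<in> G0. bisect_map G m i (transposition B) x \<noteq> x} \<subseteq> src ` B \<union> rng ` B"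
    by blast
qed (use compact_open_bisectionD[OF assms(1)] in auto)

lemma
  assumes "compact_open_bisection B" "src ` B \<inter> rng ` B = {}"
  shows transposition_in_full_group: "bisect_map G m i (transposition B) \<in> full_group T G m i"
    and transposition_involution:
      "bisect_map G m i (transposition B) \<circ> bisect_map G m i (transposition B) = id"
  using full_bisection_transposition[OF assms] compact_support_transposition[OF assms]
    inv_transposition[OF compact_open_bisectionD(1)[OF assms(1)]]
  by (simp_all add: bisect_map_in_full_group bisect_map_involution)

lemma full_group_covers:
  assumes "\<forall>x\<in>G0. card_ge (orbit G m i x) 2"
  shows "covers T G m i (full_group T G m i)"
proof (rule covers_if_non_isotropic_covered)
  show "f \<circ> h \<in> full_group T G m i" if "f \<in> full_group T G m i" "h \<in> full_group T G m i" for f h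
    using that by (rule full_group_comp)
  show "\<not> orbit G m i x \<subseteq> {x}" if "x \<in> G0" for x
    using card_ge_imp_not_subset[of "orbit G m i x" 2 "{x}"] assms that by simp
  fix g assume g: "g \<in> G" "src g \<noteq> rng g"
  obtain B where B: "compact_open_bisection B" "g \<in> B" "src ` B \<inter> rng ` B = {}"
    and "src ` B \<union> rng ` B \<subseteq> G0"
    by (rule non_isotropic_compact_open_bisection[OF g openin_units src_in_units[OF g(1)]
        rng_in_units[OF g(1)]])
  have "g \<in> transposition B"
    using B(2) by (simp add: transposition_def)
  then show "\<exists>U. full_bisection T G m i U \<and> g \<in> U \<and> bisect_map G m i U \<in> full_group T G m i"
    using full_bisection_transposition[OF B(1,3)] transposition_in_full_group[OF B(1,3)] by blast
qed

lemma covered_by_transposition_commutator: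
  assumes A: "compact_open_bisection A" "src ` A \<inter> rng ` A = {}" "g \<in> A"
    and C: "compact_open_bisection C" "src ` C \<inter> rng ` C = {}" "h \<in> C"
    and "rng h \<in> transposition A" "src h = rng g"
  shows "\<exists>U. full_bisection T G m i U \<and> g \<in> U \<and>
    bisect_map G m i U \<in> full_group_commutator T G m i"
proof -
  let ?A = "transposition A" and ?C = "transposition C"
  note fb = full_bisection_transposition[OF A(1,2)] full_bisection_transposition[OF C(1,2)]
  have "g \<in> mult_set ?C (mult_set ?A (mult_set ?C ?A))"
  proof (rule mem_mult_set_conjugate)
    show "g \<in> ?A" "h \<in> ?C" "i h \<in> ?C"
      using A(3) C(3) by (simp_all add: transposition_def)
    show "?A \<subseteq> G" "?C \<subseteq> G"
      using fb by (simp_all add: full_bisection_subset)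
  qed (use assms in auto)
  moreover have "full_bisection T G m i (mult_set ?C (mult_set ?A (mult_set ?C ?A)))"
    using fb by (intro full_bisection_mult_set)
  moreover have "bisect_map G m i (mult_set ?C (mult_set ?A (mult_set ?C ?A))) \<in>
      full_group_commutator T G m i"
    using fb involution_commutator_in_full_group_commutator[OF
        transposition_in_full_group[OF C(1,2)] transposition_involution[OF C(1,2)]
        transposition_in_full_group[OF A(1,2)] transposition_involution[OF A(1,2)]]
    by (simp add: bisect_map_mult_set full_bisection_mult_set o_assoc)
  ultimately show ?thesis
    by blast
qed

lemma full_group_commutator_covers:
  assumes "\<forall>x\<in>G0. card_ge (orbit G m i x) 3"
  shows "covers T G m i (full_group_commutator T G m i)"
proof (rule covers_if_non_isotropic_covered)
  show "f \<circ> h \<in> full_group_commutator T G m i"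
    if "f \<in> full_group_commutator T G m i" "h \<in> full_group_commutator T G m i" for f h
    using that by (rule full_group_commutator_comp)
  show "\<not> orbit G m i x \<subseteq> {x}" if "x \<in> G0" for x
    using card_ge_imp_not_subset[of "orbit G m i x" 3 "{x}"] assms that by simp
  fix g assume g: "g \<in> G" "src g \<noteq> rng g"
  have "\<not> orbit G m i (src g) \<subseteq> {src g, rng g}"
    using card_ge_imp_not_subset[of "orbit G m i (src g)" 3 "{src g, rng g}"] assms
      src_in_units[OF g(1)]
    by (simp add: card_insert_if)
  then obtain k where k: "k \<in> G" "src k = src g" "rng k \<noteq> src g" "rng k \<noteq> rng g"
    unfolding orbit_def by blast
  define h where "h = m k (i g)"
  have h: "h \<in> G" "src h = rng g" "rng h = rng k"
    using k g by (simp_all add: h_def mult_closed inv_closed src_mult rng_mult src_inv rng_inv)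
  obtain A where A: "compact_open_bisection A" "g \<in> A" "src ` A \<inter> rng ` A = {}"
      "src ` A \<union> rng ` A \<subseteq> G0 - {rng k}"
  proof (rule non_isotropic_compact_open_bisection[OF g openin_units_delete[OF rng_in_units[OF k(1)]]])
    show "src g \<in> G0 - {rng k}" "rng g \<in> G0 - {rng k}"
      using g(1) k src_in_units rng_in_units by auto
  qed
  have "src h \<noteq> rng h"
    using h k by simp
  then obtain C where C: "compact_open_bisection C" "h \<in> C" "src ` C \<inter> rng ` C = {}"
    and "src ` C \<union> rng ` C \<subseteq> G0"
    by (rule non_isotropic_compact_open_bisection[OF h(1) _ openin_units src_in_units[OF h(1)]
        rng_in_units[OF h(1)]])
  have "rng h \<in> transposition A"
    using A(4) h(3) rng_in_units[OF k(1)] by (auto simp: transposition_def)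
  then show "\<exists>U. full_bisection T G m i U \<and> g \<in> U \<and>
      bisect_map G m i U \<in> full_group_commutator T G m i"
    using covered_by_transposition_commutator[OF A(1,3,2) C(1,3,2)] h(2) by blast
qed

end

theorem lemma4p8:
  fixes T :: "'g topology" and G :: "'g set" and m :: "'g \<Rightarrow> 'g \<Rightarrow> 'g" and i :: "'g \<Rightarrow> 'g"
  assumes "ample T G m i" and "effective T G m i"
  shows "((\<forall>x\<in>units G m i. card_ge (orbit G m i x) 2) \<longrightarrow> covers T G m i (full_group T G m i))
       \<and> ((\<forall>x\<in>units G m i. card_ge (orbit G m i x) 3) \<longrightarrow> covers T G m i (full_group_commutator T G m i))"
proof -
  interpret ample_groupoid T G m i
    using assms(1) by unfold_locales
  show ?thesis
    using full_group_covers full_group_commutator_covers by blast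
qed

end
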